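(* Let $F=K_{a_1,\ldots,a_r}$ be an almost balanced complete $r$-partite graph with $r\ge 2$ and $a_1\ge\cdots\ge a_r\ge 1$, let $\ell=a_1+\cdots+a_r$, and let $m=m_{r,\ell}$. Then \[ \binom{\ell}{2}>m\sum_{k=1}^{r}\binom{a_k}{2}. \]
   Context: $K_{a_1,\ldots,a_r}$ is the complete $r$-partite graph with part sizes $a_1,\ldots,a_r$; it is almost balanced if it is not a complete graph (so $\ell\ge r+1$) and $\binom{a_1-a_r}{2}<a_r$. $m_{r,\ell}$ is the unique integer $k\ge r$ maximizing $f(k)=\frac{(k-1)(k-2)\cdots(k-r+1)}{k^{\ell-1}}$ over all integers $k\ge r$. *)

theory Defs
  imports Complex_Main
begin

definition f_rl :: "nat \<Rightarrow> nat \<Rightarrow> nat \<Rightarrow> real" where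
  "f_rl r l k = (\<Prod>i=1..<r. real k - real i) / real k ^ (l - 1)"

definition m_rl :: "nat \<Rightarrow> nat \<Rightarrow> nat" where
  "m_rl r l = (THE k. r \<le> k \<and> (\<forall>j. r \<le> j \<longrightarrow> f_rl r l j \<le> f_rl r l k))"

text \<open>Complete r-partite graph K_{a_1,...,a_r} given by part sizes a 1, ..., a r
  (with a_1 \<ge> ... \<ge> a_r).  It is a complete graph iff all parts have size 1.
  Almost balanced: not complete, and binom(a_1 - a_r, 2) < a_r.\<close>
definition almost_balanced :: "nat \<Rightarrow> (nat \<Rightarrow> nat) \<Rightarrow> bool" where
  "almost_balanced r a \<longleftrightarrow>
     \<not> (\<forall>i\<in>{1..r}. a i = 1) \<and> ((a 1 - a r) choose 2) < a r"

end

(*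
  Write r = q + 1 and l = r + u, so f k = (k-1)...(k-q) / k^(q+u) for k >= r.  Since
  f (k+1) / f k = k^(q+u+1) / ((k-q) (k+1)^(q+u)), consecutive values of f are never
  equal (k + 1 is coprime to k), and ln (f k) = ln_profile q u (1/k), which is
  strictly concave in t on (0, 1/q).  Hence f rises and then strictly falls, and m = m_{r,l}
  is the first k at which f descends.  If m > r then f (m-1) <= f m, and expanding
  (1 + 1/(m-1))^(q+u) to second order turns this into the quadratic inequality
  mode_quadratic q u (m - r) >= 0, which bounds m from above.

  On the other side, with c = a_r and d = a_1 - a_r, almost balancedness says
  d (d-1) <= 2c - 2, and all parts lie in [c, c+d].  If c = 1 the parts are 1 or 2, so
  sum a_k (a_k - 1) <= 2u; if c >= 2 then u >= r and a quadratic estimate gives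
  16 r sum a_k (a_k - 1) <= 16 u^2 + 24 r u + r^2.  Each case, together with the bound
  on m, yields m sum a_k (a_k - 1) < l (l - 1).
*)

theory Submission
  imports Defs
begin

lemma real_choose_two: "real (n choose 2) = real n * (real n - 1) / 2"
  by (cases n) (auto simp: choose_two real_of_nat_div algebra_simps)

lemma Bernoulli_inequality_second_order:
  fixes x :: real
  assumes "0 \<le> x"
  shows "1 + real n * x + real n * (real n - 1) / 2 * x\<^sup>2 \<le> (1 + x) ^ n"
proof (induction n)
  case 0
  then show ?case by simp
next
  case (Suc n)
  have "(1 + x) * (1 + real n * x + real n * (real n - 1) / 2 * x\<^sup>2)
      = 1 + real (Suc n) * x + real (Suc n) * (real (Suc n) - 1) / 2 * x\<^sup>2
        + real n * (real n - 1) / 2 * x ^ 3"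
    by (simp add: field_simps power2_eq_square power3_eq_cube)
  moreover have "0 \<le> real n * (real n - 1) / 2 * x ^ 3"
    using assms by (cases n) auto
  ultimately have "1 + real (Suc n) * x + real (Suc n) * (real (Suc n) - 1) / 2 * x\<^sup>2
      \<le> (1 + x) * (1 + real n * x + real n * (real n - 1) / 2 * x\<^sup>2)"
    by linarith
  also have "\<dots> \<le> (1 + x) * (1 + x) ^ n"
    using Suc assms by (intro mult_left_mono) auto
  finally show ?case
    by simp
qed

lemma DERIV_strict_antimono_descent_persists:
  fixes f f' :: "real \<Rightarrow> real"
  assumes deriv: "\<And>x. a \<le> x \<Longrightarrow> x \<le> c \<Longrightarrow> (f has_real_derivative f' x) (at x)"
    and antimono: "\<And>x y. a \<le> x \<Longrightarrow> x < y \<Longrightarrow> y \<le> c \<Longrightarrow> f' y < f' x"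
    and "a < b" "b < c" "f b \<le> f a"
  shows "f c < f b"
proof -
  obtain x where x: "a < x" "x < b" "f b - f a = (b - a) * f' x"
    using MVT2[of a b f f'] deriv assms(3,4) by auto
  obtain y where y: "b < y" "y < c" "f c - f b = (c - b) * f' y"
    using MVT2[of b c f f'] deriv assms(3,4) by auto
  have "(b - a) * f' x \<le> 0"
    using x(3) assms(5) by simp
  then have "f' x \<le> 0"
    using assms(3) by (simp add: mult_le_0_iff)
  moreover have "f' y < f' x"
    using x y by (intro antimono) auto
  ultimately have "(c - b) * f' y < 0"
    using y by (simp add: mult_pos_neg)
  then show ?thesis
    using y(3) by simp
qed

lemma concave_quadratic_nonneg_imp_less:
  fixes a b c y z :: real
  assumes "a \<le> 0" "0 \<le> c" "0 < y"
    and "a * y\<^sup>2 + b * y + c < 0" "0 \<le> a * z\<^sup>2 + b * z + c"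
  shows "z < y"
proof (rule ccontr)
  assume "\<not> z < y"
  moreover have "a * y * z \<le> 0"
    using assms(1,3) \<open>\<not> z < y\<close> by (simp add: mult_nonpos_nonneg)
  ultimately have "0 \<le> (z - y) * (c - a * y * z)"
    using assms(2) by simp
  moreover have "z * (a * y\<^sup>2 + b * y + c) < 0"
    using assms(3,4) \<open>\<not> z < y\<close> by (simp add: mult_pos_neg)
  moreover have "y * (a * z\<^sup>2 + b * z + c) = z * (a * y\<^sup>2 + b * y + c) - (z - y) * (c - a * y * z)"
    by (simp add: algebra_simps power2_eq_square)
  ultimately have "y * (a * z\<^sup>2 + b * z + c) < 0"
    by linarith
  then show False
    using assms(3,5) by (simp add: mult_less_0_iff)
qed

lemma sum_ordered_pairs_le:
  fixes x :: "'a \<Rightarrow> real" and c d :: real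
  assumes "finite I" "\<And>i. i \<in> I \<Longrightarrow> c \<le> x i \<and> x i \<le> c + d"
  shows "(\<Sum>i\<in>I. x i * (x i - 1)) \<le> (2 * c + d - 1) * (\<Sum>i\<in>I. x i) - real (card I) * (c * (c + d))"
proof -
  have "x i * (x i - 1) \<le> (2 * c + d - 1) * x i - c * (c + d)" if "i \<in> I" for i
  proof -
    have "(x i - c) * (x i - c - d) \<le> 0"
      using assms(2)[OF that] by (intro mult_nonneg_nonpos) auto
    then show ?thesis
      by (simp add: algebra_simps)
  qed
  then have "(\<Sum>i\<in>I. x i * (x i - 1)) \<le> (\<Sum>i\<in>I. (2 * c + d - 1) * x i - c * (c + d))"
    by (rule sum_mono)
  then show ?thesis
    by (simp add: sum_subtractf sum_distrib_left)
qed

lemma sum_ordered_pairs_le_balanced: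
  fixes x :: "'a \<Rightarrow> real" and c d :: real
  assumes "finite I" "\<And>i. i \<in> I \<Longrightarrow> c \<le> x i \<and> x i \<le> c + d" "d * (d - 1) \<le> 2 * c - 2"
  defines "n \<equiv> real (card I)" and "L \<equiv> \<Sum>i\<in>I. x i"
  shows "16 * n * (\<Sum>i\<in>I. x i * (x i - 1)) \<le> 16 * (L - n)\<^sup>2 + 24 * n * (L - n) + n\<^sup>2"
proof -
  have "16 * n * (\<Sum>i\<in>I. x i * (x i - 1)) \<le> 16 * n * ((2 * c + d - 1) * L - n * (c * (c + d)))"
    unfolding n_def L_def using sum_ordered_pairs_le[OF assms(1,2)] by (intro mult_left_mono) auto
  also have "\<dots> = 16 * (L - n)\<^sup>2 + 24 * n * (L - n) + n\<^sup>2
      - (4 * (L - n * c) - n * (2 * d - 1))\<^sup>2 - 4 * n\<^sup>2 * (2 * c - 2 - d * (d - 1))"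
    by (simp add: algebra_simps power2_eq_square)
  also have "\<dots> \<le> 16 * (L - n)\<^sup>2 + 24 * n * (L - n) + n\<^sup>2"
  proof -
    have "0 \<le> 4 * n\<^sup>2 * (2 * c - 2 - d * (d - 1))"
      using assms(3) by simp
    then show ?thesis
      using zero_le_power2[of "4 * (L - n * c) - n * (2 * d - 1)"] by linarith
  qed
  finally show ?thesis .
qed

lemma f_rl_pos: "Suc q \<le> k \<Longrightarrow> 0 < f_rl (Suc q) l k"
  unfolding f_rl_def by (intro divide_pos_pos prod_pos) auto

lemma f_rl_Suc:
  assumes "Suc q \<le> k"
  shows "f_rl (Suc q) l (Suc k) * ((real k - real q) * real (Suc k) ^ (l - 1))
       = f_rl (Suc q) l k * (real k ^ (l - 1) * real k)"
proof -
  define G where "G k' = (\<Prod>i=1..<Suc q. real k' - real i)" for k'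
  have "G (Suc k) * (real k - real q) = real k * G k"
    unfolding G_def by (induction q) (simp_all add: prod.atLeastLessThan_Suc algebra_simps)
  moreover have "f_rl (Suc q) l k' = G k' / real k' ^ (l - 1)" for k'
    unfolding f_rl_def G_def ..
  ultimately show ?thesis
    using assms by (simp add: mult.assoc mult.left_commute[of _ "real (Suc k) ^ (l - 1)"])
qed

lemma f_rl_le_Suc_iff:
  assumes "Suc q \<le> k"
  shows "f_rl (Suc q) l k \<le> f_rl (Suc q) l (Suc k)
     \<longleftrightarrow> (real k - real q) * real (Suc k) ^ (l - 1) \<le> real k ^ (l - 1) * real k"
    (is "?f k \<le> ?f (Suc k) \<longleftrightarrow> ?A \<le> ?B")
proof -
  have "0 < ?A"
    using assms by simp
  then have "?f k \<le> ?f (Suc k) \<longleftrightarrow> ?f k * ?A \<le> ?f (Suc k) * ?A"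
    by (rule mult_le_cancel_right_pos[symmetric])
  also have "\<dots> \<longleftrightarrow> ?f k * ?A \<le> ?f k * ?B"
    using f_rl_Suc[OF assms] by simp
  also have "\<dots> \<longleftrightarrow> ?A \<le> ?B"
    using f_rl_pos[OF assms] by (rule mult_le_cancel_left_pos)
  finally show ?thesis .
qed

lemma f_rl_Suc_neq:
  assumes "Suc q \<le> k" "2 \<le> l"
  shows "f_rl (Suc q) l (Suc k) \<noteq> f_rl (Suc q) l k"
proof
  assume "f_rl (Suc q) l (Suc k) = f_rl (Suc q) l k"
  then have "real ((k - q) * Suc k ^ (l - 1)) = real (k ^ (l - 1) * k)"
    using f_rl_Suc[OF assms(1), of l] f_rl_pos[OF assms(1), of l] assms(1) by (simp add: of_nat_diff)
  then have "(k - q) * Suc k ^ (l - 1) = k ^ Suc (l - 1)"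
    by (simp only: of_nat_eq_iff mult.commute power_Suc)
  moreover have "Suc k dvd (k - q) * Suc k ^ (l - 1)"
    using assms(2) by (simp add: dvd_power)
  ultimately have "Suc k dvd k ^ Suc (l - 1)"
    by simp
  moreover have "coprime (Suc k) (k ^ Suc (l - 1))"
    by simp
  ultimately have "is_unit (Suc k)"
    using coprime_absorb_left by blast
  then show False
    using assms(1) by simp
qed

lemma f_rl_Suc_less:
  assumes "Suc q \<le> k" "real (q + u) * real q < real u * real k"
  shows "f_rl (Suc q) (Suc q + u) (Suc k) < f_rl (Suc q) (Suc q + u) k"
proof -
  have k: "0 < real k" "real q < real k"
    using assms(1) by auto
  have "1 + real (q + u) * (1 / real k) \<le> (1 + 1 / real k) ^ (q + u)"
    by (rule Bernoulli_inequality) (simp add: order.trans[of _ 0])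
  then have bern: "real k ^ (q + u) * (1 + real (q + u) / real k) \<le> real (Suc k) ^ (q + u)"
    using k by (simp add: field_simps power_divide)
  have "real k ^ (q + u) * real k < real k ^ (q + u) * ((real k - real q) * (1 + real (q + u) / real k))"
    using assms(2) k by (intro mult_strict_left_mono) (simp_all add: field_simps)
  also have "\<dots> = (real k - real q) * (real k ^ (q + u) * (1 + real (q + u) / real k))"
    by (simp only: ac_simps)
  also have "\<dots> \<le> (real k - real q) * real (Suc k) ^ (q + u)"
    using bern k by (intro mult_left_mono) simp_all
  finally show ?thesis
    using f_rl_le_Suc_iff[OF assms(1), of "Suc q + u"] by simp
qed

lemma f_rl_has_descent:
  assumes "1 \<le> u"
  shows "\<exists>k. Suc q \<le> k \<and> f_rl (Suc q) (Suc q + u) (Suc k) < f_rl (Suc q) (Suc q + u) k"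
proof (intro exI conjI)
  let ?k = "(q + u) * q + Suc q"
  show "Suc q \<le> ?k"
    by simp
  have "real (q + u) * real q < real ?k"
    by simp
  also have "\<dots> \<le> real u * real ?k"
    using assms mult_right_mono[of 1 "real u" "real ?k"] by simp
  finally show "f_rl (Suc q) (Suc q + u) (Suc ?k) < f_rl (Suc q) (Suc q + u) ?k"
    by (intro f_rl_Suc_less) simp_all
qed

definition ln_profile :: "nat \<Rightarrow> nat \<Rightarrow> real \<Rightarrow> real" where
  "ln_profile q u t = real u * ln t + (\<Sum>i=1..q. ln (1 - real i * t))"

lemma f_rl_eq_exp_ln_profile:
  assumes "Suc q \<le> k"
  shows "f_rl (Suc q) (Suc q + u) k = exp (ln_profile q u (1 / real k))"
proof -
  have k: "0 < real k"
    using assms by simp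
  have pos: "0 < 1 - real i * (1 / real k)" if "i \<in> {1..q}" for i
    using that assms by (simp add: field_simps)
  have "exp (ln_profile q u (1 / real k)) = (1 / real k) ^ u * (\<Prod>i=1..q. 1 - real i * (1 / real k))"
    unfolding ln_profile_def using k pos by (simp add: exp_add exp_sum exp_of_nat_mult)
  also have "(\<Prod>i=1..q. 1 - real i * (1 / real k)) = (\<Prod>i=1..q. (real k - real i) / real k)"
    using k by (intro prod.cong) (auto simp: field_simps)
  also have "\<dots> = (\<Prod>i=1..q. real k - real i) / real k ^ q"
    by (simp add: prod_dividef)
  finally show ?thesis
    unfolding f_rl_def using k by (simp add: atLeastLessThanSuc_atLeastAtMost field_simps power_add)
qed

lemma ln_profile_has_real_derivative:
  assumes "0 < t" "real q * t < 1"
  shows "(ln_profile q u has_real_derivative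
          real u / t - (\<Sum>i=1..q. real i / (1 - real i * t))) (at t)"
proof -
  have "0 < 1 - real i * t" if "i \<in> {1..q}" for i
  proof -
    have "real i * t \<le> real q * t"
      using that assms(1) by (intro mult_right_mono) auto
    then show ?thesis
      using assms(2) by linarith
  qed
  then show ?thesis
    unfolding ln_profile_def[abs_def] using assms(1)
    by (auto intro!: derivative_eq_intros simp: sum_negf simp flip: sum_subtractf)
qed

lemma ln_profile_derivative_strict_antimono:
  assumes "1 \<le> u" "0 < x" "x < y" "real q * y < 1"
  shows "real u / y - (\<Sum>i=1..q. real i / (1 - real i * y))
       < real u / x - (\<Sum>i=1..q. real i / (1 - real i * x))"
proof -
  have "real i / (1 - real i * x) \<le> real i / (1 - real i * y)" if "i \<in> {1..q}" for i
  proof -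
    have "real i * y \<le> real q * y"
      using that assms by (intro mult_right_mono) auto
    moreover have "real i * x \<le> real i * y"
      using assms by (intro mult_left_mono) auto
    ultimately show ?thesis
      using assms(4) by (intro divide_left_mono mult_pos_pos) auto
  qed
  then have "(\<Sum>i=1..q. real i / (1 - real i * x)) \<le> (\<Sum>i=1..q. real i / (1 - real i * y))"
    by (rule sum_mono)
  moreover have "real u / y < real u / x"
    using assms by (intro divide_strict_left_mono) auto
  ultimately show ?thesis
    by linarith
qed

lemma f_rl_descent_persists:
  assumes "1 \<le> u" "Suc q \<le> k"
    and "f_rl (Suc q) (Suc q + u) (Suc k) \<le> f_rl (Suc q) (Suc q + u) k"
  shows "f_rl (Suc q) (Suc q + u) (Suc (Suc k)) < f_rl (Suc q) (Suc q + u) (Suc k)"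
proof (rule ccontr)
  let ?g = "ln_profile q u"
  define g' where "g' t = real u / t - (\<Sum>i=1..q. real i / (1 - real i * t))" for t
  define a b c where "a = 1 / real (Suc (Suc k))" and "b = 1 / real (Suc k)" and "c = 1 / real k"
  have abc: "0 < a" "a < b" "b < c" "real q * c < 1"
    using assms(2) by (auto simp: a_def b_def c_def field_simps)
  have f_eq: "f_rl (Suc q) (Suc q + u) j = exp (?g (1 / real j))" if "k \<le> j" for j
    using that assms(2) by (intro f_rl_eq_exp_ln_profile) simp
  assume "\<not> ?thesis"
  then have "?g b \<le> ?g a"
    unfolding a_def b_def by (simp only: f_eq le_SucI order.refl not_less exp_le_cancel_iff)
  moreover have "(?g has_real_derivative g' x) (at x)" if "a \<le> x" "x \<le> c" for x
    unfolding g'_def using that abc mult_left_mono[of x c "real q"]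
    by (intro ln_profile_has_real_derivative) auto
  moreover have "g' y < g' x" if "a \<le> x" "x < y" "y \<le> c" for x y
    unfolding g'_def using that abc assms(1) mult_left_mono[of y c "real q"]
    by (intro ln_profile_derivative_strict_antimono) auto
  ultimately have "?g c < ?g b"
    using abc by (intro DERIV_strict_antimono_descent_persists[of a c ?g g' b])
  then show False
    using assms(3) unfolding b_def c_def
    by (simp only: f_eq le_SucI order.refl exp_le_cancel_iff)
qed

lemma f_rl_decreasing_after_descent:
  assumes "1 \<le> u" "Suc q \<le> k"
    and "f_rl (Suc q) (Suc q + u) (Suc k) < f_rl (Suc q) (Suc q + u) k" "k < j"
  shows "f_rl (Suc q) (Suc q + u) j < f_rl (Suc q) (Suc q + u) k"
proof -
  let ?f = "f_rl (Suc q) (Suc q + u)"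
  have descent: "?f (Suc i) < ?f i" if "k \<le> i" for i
    using that
  proof (induction i rule: dec_induct)
    case (step i)
    then show ?case
      using assms(1,2) by (intro f_rl_descent_persists) auto
  qed (use assms(3) in simp)
  from assms(4) have "Suc k \<le> j"
    by simp
  then show ?thesis
  proof (induction j rule: dec_induct)
    case (step j)
    then show ?case
      using descent[of j] by simp
  qed (use assms(3) in simp)
qed

lemma m_rl_eq_first_descent:
  assumes "1 \<le> u"
  shows "m_rl (Suc q) (Suc q + u)
       = (LEAST k. Suc q \<le> k \<and> f_rl (Suc q) (Suc q + u) (Suc k) < f_rl (Suc q) (Suc q + u) k)"
    (is "_ = (LEAST k. ?descent k)")
proof -
  let ?f = "f_rl (Suc q) (Suc q + u)"
  define k0 where "k0 = (LEAST k. ?descent k)"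
  have k0: "Suc q \<le> k0" "?f (Suc k0) < ?f k0"
    using LeastI_ex[OF f_rl_has_descent[OF assms]] unfolding k0_def by auto
  have rising: "?f i \<le> ?f (Suc i)" if "Suc q \<le> i" "i < k0" for i
    using that not_less_Least[of i ?descent] unfolding k0_def by auto
  have below: "?f j \<le> ?f n" if "Suc q \<le> j" "j \<le> n" "n \<le> k0" for j n
    using that(2,3)
  proof (induction n rule: dec_induct)
    case (step n)
    then show ?case
      using rising[of n] that(1) by simp
  qed simp
  have maximal: "?f j \<le> ?f k0" if "Suc q \<le> j" for j
  proof (cases "j \<le> k0")
    case True
    then show ?thesis
      using below that by simp
  next
    case False
    then show ?thesis
      using f_rl_decreasing_after_descent[OF assms k0, of j] by simp
  qed
  have unique: "k = k0" if "Suc q \<le> k" "\<forall>j. Suc q \<le> j \<longrightarrow> ?f j \<le> ?f k" for k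
  proof (rule linorder_cases[of k k0])
    assume "k < k0"
    then have "?f (Suc k) = ?f k"
      using rising[of k] that by (simp add: order.antisym)
    then show ?thesis
      using f_rl_Suc_neq[OF that(1)] assms by simp
  next
    assume "k0 < k"
    then have "?f k < ?f k0"
      by (rule f_rl_decreasing_after_descent[OF assms k0])
    moreover have "?f k0 \<le> ?f k"
      using that(2) k0(1) by blast
    ultimately show ?thesis
      by simp
  qed
  show ?thesis
    unfolding m_rl_def k0_def[symmetric]
  proof (rule the_equality)
    show "Suc q \<le> k0 \<and> (\<forall>j. Suc q \<le> j \<longrightarrow> ?f j \<le> ?f k0)"
      using k0(1) maximal by blast
  qed (use unique in blast)
qed

text \<open>With \<open>k = q + j\<close> and \<open>p = q + u\<close>, \<open>mode_quadratic q u j = 2k\<^sup>3 - j (2k\<^sup>2 + 2pk + p(p-1))\<close>: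
  the condition \<open>f k \<le> f (k+1)\<close> with \<open>(1 + 1/k)^p\<close> expanded to second order.\<close>

definition mode_quadratic :: "real \<Rightarrow> real \<Rightarrow> real \<Rightarrow> real" where
  "mode_quadratic q u j = 2 * q ^ 3 - (u\<^sup>2 + 4 * q * u - q\<^sup>2 - q - u) * j - 2 * u * j\<^sup>2"

lemma mode_quadratic_nonneg_if_f_rl_le_Suc:
  assumes "Suc q \<le> k" "f_rl (Suc q) (Suc q + u) k \<le> f_rl (Suc q) (Suc q + u) (Suc k)"
  shows "0 \<le> mode_quadratic q u (real k - real q)"
proof -
  define p where "p = q + u"
  define E where "E = 2 * real k ^ 2 + 2 * real p * real k + real p * (real p - 1)"
  have k: "0 < real k" "real q < real k"
    using assms(1) by auto
  have "real k ^ p * E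
      = real k ^ p * (2 * real k ^ 2 * (1 + real p * (1 / real k) + real p * (real p - 1) / 2 * (1 / real k) ^ 2))"
    using k by (simp add: E_def field_simps power2_eq_square)
  also have "\<dots> \<le> real k ^ p * (2 * real k ^ 2 * (1 + 1 / real k) ^ p)"
    by (intro mult_left_mono Bernoulli_inequality_second_order) auto
  also have "\<dots> = 2 * real k ^ 2 * real (Suc k) ^ p"
    using k by (simp add: field_simps flip: power_mult_distrib)
  finally have bern: "real k ^ p * E \<le> 2 * real k ^ 2 * real (Suc k) ^ p" .
  have "(real k - real q) * real (Suc k) ^ p \<le> real k ^ p * real k"
    using f_rl_le_Suc_iff[OF assms(1), of "Suc q + u"] assms(2) by (simp add: p_def)
  then have "2 * real k ^ 2 * ((real k - real q) * real (Suc k) ^ p) \<le> 2 * real k ^ 2 * (real k ^ p * real k)"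
    by (rule mult_left_mono) simp
  then have "(real k - real q) * (2 * real k ^ 2 * real (Suc k) ^ p) \<le> real k ^ p * (2 * real k ^ 3)"
    by (simp add: power2_eq_square power3_eq_cube ac_simps)
  moreover have "(real k - real q) * (real k ^ p * E) \<le> (real k - real q) * (2 * real k ^ 2 * real (Suc k) ^ p)"
    using bern k by (intro mult_left_mono) auto
  ultimately have "real k ^ p * ((real k - real q) * E) \<le> real k ^ p * (2 * real k ^ 3)"
    by (simp add: ac_simps)
  then have "(real k - real q) * E \<le> 2 * real k ^ 3"
    using k by simp
  then show ?thesis
    unfolding mode_quadratic_def E_def p_def by (simp add: algebra_simps power2_eq_square power3_eq_cube)
qed

lemma m_rl_mode_quadratic_nonneg:
  fixes q u :: nat
  assumes "1 \<le> u"
  defines "m \<equiv> m_rl (Suc q) (Suc q + u)"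
  shows "Suc q \<le> m" "0 \<le> mode_quadratic q u (real m - real (Suc q))"
proof -
  let ?descent = "\<lambda>k. Suc q \<le> k \<and> f_rl (Suc q) (Suc q + u) (Suc k) < f_rl (Suc q) (Suc q + u) k"
  have m: "m = (LEAST k. ?descent k)"
    unfolding m_def using assms(1) by (rule m_rl_eq_first_descent)
  show m_ge: "Suc q \<le> m"
    using LeastI_ex[OF f_rl_has_descent[OF assms(1)]] unfolding m by auto
  show "0 \<le> mode_quadratic q u (real m - real (Suc q))"
  proof (cases "m = Suc q")
    case True
    then show ?thesis
      by (simp add: mode_quadratic_def)
  next
    case False
    with m_ge obtain k where k: "m = Suc k" "Suc q \<le> k"
      by (metis Suc_le_D le_Suc_eq)
    then have "\<not> ?descent k"
      using not_less_Least[of k ?descent] m by simp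
    then have "0 \<le> mode_quadratic q u (real k - real q)"
      using k(2) by (intro mode_quadratic_nonneg_if_f_rl_le_Suc) simp_all
    then show ?thesis
      using k(1) by simp
  qed
qed

lemma mode_quadratic_nonneg_bound_for_parts_le_2:
  fixes q u j :: real
  assumes "1 \<le> q" "1 \<le> u" "0 \<le> mode_quadratic q u j"
  shows "2 * u * (q + 1 + j) < (q + 1 + u) * (q + u)"
proof -
  \<comment> \<open>the value of \<open>j\<close> for which the claimed inequality is an equality\<close>
  define y where "y = (q\<^sup>2 + q + u\<^sup>2 - u) / (2 * u)"
  have "mode_quadratic q u y = - ((q + u - 1) * (u * q + u\<^sup>2 + q - u))"
    using assms(2) by (simp add: mode_quadratic_def y_def field_simps power2_eq_square power3_eq_cube)
  also have "\<dots> < 0"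
  proof -
    have "u \<le> u * q"
      using assms(1,2) mult_left_mono[of 1 q u] by simp
    then have "0 < u * q + u\<^sup>2 + q - u"
      using assms(1) zero_le_power2[of u] by linarith
    then show ?thesis
      using assms(1,2) by simp
  qed
  finally have y_neg: "mode_quadratic q u y < 0" .
  have y_pos: "0 < y"
  proof -
    have "u \<le> u\<^sup>2"
      using assms(2) mult_left_mono[of 1 u u] by (simp add: power2_eq_square)
    moreover have "0 \<le> q\<^sup>2"
      by simp
    ultimately show ?thesis
      using assms(1,2) unfolding y_def by (intro divide_pos_pos) linarith+
  qed
  have expand: "mode_quadratic q u x
      = (- 2 * u) * x\<^sup>2 + (q\<^sup>2 + q + u - u\<^sup>2 - 4 * q * u) * x + 2 * q ^ 3" for x
    by (simp add: mode_quadratic_def algebra_simps)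
  have "j < y"
  proof (rule concave_quadratic_nonneg_imp_less)
    show "- 2 * u \<le> 0" "0 \<le> 2 * q ^ 3"
      using assms(1,2) by simp_all
    show "(- 2 * u) * y\<^sup>2 + (q\<^sup>2 + q + u - u\<^sup>2 - 4 * q * u) * y + 2 * q ^ 3 < 0"
      using y_neg by (simp only: expand)
    show "0 \<le> (- 2 * u) * j\<^sup>2 + (q\<^sup>2 + q + u - u\<^sup>2 - 4 * q * u) * j + 2 * q ^ 3"
      using assms(3) by (simp only: expand)
  qed (rule y_pos)
  then have "2 * u * (q + 1 + j) < 2 * u * (q + 1) + 2 * u * y"
    using assms(2) by (simp add: distrib_left)
  also have "2 * u * y = q\<^sup>2 + q + u\<^sup>2 - u"
    using assms(2) by (simp add: y_def)
  finally show ?thesis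
    by (simp add: algebra_simps power2_eq_square)
qed

lemma mode_bound_for_parts_ge_2_polynomial:
  fixes q u :: real
  assumes "1 \<le> q" "q + 1 \<le> u"
  defines "D \<equiv> u\<^sup>2 + 4 * q * u - q\<^sup>2 - q - u"
  shows "((q + 1) * D + 2 * q ^ 3) * (16 * u\<^sup>2 + 24 * (q + 1) * u + (q + 1)\<^sup>2)
       < 16 * (q + 1) * (q + 1 + u) * (q + u) * D"
proof -
  define s v where "s = q - 1" and "v = u - q - 1"
  have sv: "0 \<le> s" "0 \<le> v" "q = s + 1" "u = s + 2 + v"
    using assms(1,2) by (simp_all add: s_def v_def)
  have "16 * (q + 1) * (q + 1 + u) * (q + u) * D
      - ((q + 1) * D + 2 * q ^ 3) * (16 * u\<^sup>2 + 24 * (q + 1) * u + (q + 1)\<^sup>2)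
      = 120 + 168 * v + 24 * v\<^sup>2 + 544 * s + 716 * s * v + 164 * s * v\<^sup>2 + 16 * s * v ^ 3
        + 798 * s\<^sup>2 + 878 * s\<^sup>2 * v + 162 * s\<^sup>2 * v\<^sup>2 + 8 * s\<^sup>2 * v ^ 3
        + 490 * s ^ 3 + 397 * s ^ 3 * v + 39 * s ^ 3 * v\<^sup>2 + 126 * s ^ 4 + 58 * s ^ 4 * v + 10 * s ^ 5"
    unfolding D_def sv(3,4) by algebra
  also have "\<dots> > 0"
    using sv(1,2) by (intro add_pos_nonneg add_nonneg_nonneg mult_nonneg_nonneg zero_le_power) auto
  finally show ?thesis
    by simp
qed

lemma mode_quadratic_nonneg_bound_for_parts_ge_2:
  fixes q u j :: real
  assumes "1 \<le> q" "q + 1 \<le> u" "0 \<le> j" "0 \<le> mode_quadratic q u j"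
  shows "(q + 1 + j) * (16 * u\<^sup>2 + 24 * (q + 1) * u + (q + 1)\<^sup>2) < 16 * (q + 1) * (q + 1 + u) * (q + u)"
proof -
  define D where "D = u\<^sup>2 + 4 * q * u - q\<^sup>2 - q - u"
  define K where "K = 16 * u\<^sup>2 + 24 * (q + 1) * u + (q + 1)\<^sup>2"
  have "q * q \<le> u * u"
    using assms(1,2) by (intro mult_mono) auto
  moreover have "q \<le> q * u" "u \<le> q * u" "0 < q * u"
    using assms(1,2) mult_left_mono[of 1 u q] mult_right_mono[of 1 q u] by auto
  ultimately have D_pos: "0 < D"
    unfolding D_def by (simp add: power2_eq_square)
  have "0 < (q + 1)\<^sup>2" "0 \<le> 16 * u\<^sup>2" "0 \<le> 24 * (q + 1) * u"
    using assms(1,2) by simp_all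
  then have K_pos: "0 < K"
    unfolding K_def by linarith
  \<comment> \<open>dropping \<open>- 2 u j\<^sup>2\<close> from \<open>mode_quadratic\<close> still leaves enough room when \<open>u > q\<close>\<close>
  have "0 \<le> 2 * u * j\<^sup>2"
    using assms(1,2) by simp
  then have "j * D \<le> 2 * q ^ 3"
    using assms(4) unfolding mode_quadratic_def D_def by (simp add: algebra_simps)
  have "(q + 1 + j) * K * D = ((q + 1) * D + j * D) * K"
    by (simp add: algebra_simps)
  also have "\<dots> \<le> ((q + 1) * D + 2 * q ^ 3) * K"
    using \<open>j * D \<le> 2 * q ^ 3\<close> K_pos by (intro mult_right_mono) auto
  also have "\<dots> < 16 * (q + 1) * (q + 1 + u) * (q + u) * D"
    unfolding K_def D_def using assms(1,2) by (rule mode_bound_for_parts_ge_2_polynomial)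
  finally show ?thesis
    unfolding K_def using D_pos by simp
qed

lemma m_rl_ordered_pairs_less_if_parts_le_2:
  fixes x :: "'a \<Rightarrow> nat"
  assumes "finite I" "2 \<le> card I" "\<And>i. i \<in> I \<Longrightarrow> 1 \<le> x i \<and> x i \<le> 2" "card I < sum x I"
  defines "l \<equiv> sum x I"
  shows "real (m_rl (card I) l) * (\<Sum>i\<in>I. real (x i) * (real (x i) - 1)) < real l * (real l - 1)"
proof -
  define q where "q = card I - 1"
  have q: "card I = Suc q" "1 \<le> q"
    using assms(2) by (simp_all add: q_def)
  define u where "u = l - card I"
  have l: "l = Suc q + u" "1 \<le> u"
    using assms(4) q(1) unfolding u_def l_def by simp_all
  define m where "m = m_rl (card I) l"
  have m: "Suc q \<le> m" "0 \<le> mode_quadratic q u (real m - real (Suc q))"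
    using m_rl_mode_quadratic_nonneg[OF l(2)] unfolding m_def q(1) l(1) by simp_all
  have "real (x i) * (real (x i) - 1) \<le> 2 * (real (x i) - 1)" if "i \<in> I" for i
  proof -
    have "(real (x i) - 1) * (real (x i) - 2) \<le> 0"
      using assms(3)[OF that] by (intro mult_nonneg_nonpos) auto
    then show ?thesis
      by (simp add: algebra_simps)
  qed
  then have "(\<Sum>i\<in>I. real (x i) * (real (x i) - 1)) \<le> (\<Sum>i\<in>I. 2 * (real (x i) - 1))"
    by (rule sum_mono)
  also have "\<dots> = 2 * real u"
    using assms(4) unfolding u_def l_def
    by (simp add: sum_subtractf flip: sum_distrib_left of_nat_sum)
  finally have "real m * (\<Sum>i\<in>I. real (x i) * (real (x i) - 1)) \<le> real m * (2 * real u)"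
    by (rule mult_left_mono) simp
  also have "\<dots> < real l * (real l - 1)"
  proof -
    have "2 * real u * (real q + 1 + (real m - real (Suc q))) < (real q + 1 + real u) * (real q + real u)"
      using q(2) l(2) m(2) by (intro mode_quadratic_nonneg_bound_for_parts_le_2) simp_all
    then show ?thesis
      using m(1) unfolding l(1) by (simp add: algebra_simps)
  qed
  finally show ?thesis
    unfolding m_def .
qed

lemma m_rl_ordered_pairs_less_if_parts_ge_2:
  fixes x :: "'a \<Rightarrow> nat"
  assumes "finite I" "2 \<le> card I" "\<And>i. i \<in> I \<Longrightarrow> c \<le> x i \<and> x i \<le> c + d"
    and "2 \<le> c" "real d * (real d - 1) \<le> 2 * real c - 2"
  defines "l \<equiv> sum x I"
  shows "real (m_rl (card I) l) * (\<Sum>i\<in>I. real (x i) * (real (x i) - 1)) < real l * (real l - 1)"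
proof -
  define q where "q = card I - 1"
  have q: "card I = Suc q" "1 \<le> q"
    using assms(2) by (simp_all add: q_def)
  have "2 * card I \<le> l"
    using sum_mono[of I "\<lambda>_. 2" x] assms(3,4) unfolding l_def by fastforce
  define u where "u = l - card I"
  have l: "l = Suc q + u" "q + 1 \<le> u"
    using \<open>2 * card I \<le> l\<close> q(1) unfolding u_def by simp_all
  define m where "m = m_rl (card I) l"
  have m: "Suc q \<le> m" "0 \<le> mode_quadratic q u (real m - real (Suc q))"
    using m_rl_mode_quadratic_nonneg[of u q] l unfolding m_def q(1) by simp_all
  define K where "K = 16 * real u ^ 2 + 24 * (real q + 1) * real u + (real q + 1) ^ 2"
  have "16 * real (card I) * (\<Sum>i\<in>I. real (x i) * (real (x i) - 1))
      \<le> 16 * (real l - real (card I))\<^sup>2 + 24 * real (card I) * (real l - real (card I)) + (real (card I))\<^sup>2"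
    unfolding l_def of_nat_sum using assms(1,3,5)
    by (intro sum_ordered_pairs_le_balanced[where c="real c" and d="real d"])
      (auto simp flip: of_nat_add)
  also have "\<dots> = K"
    unfolding K_def l(1) q(1) by (simp add: algebra_simps)
  finally have "16 * real (card I) * (\<Sum>i\<in>I. real (x i) * (real (x i) - 1)) \<le> K" .
  then have "16 * real (card I) * (real m * (\<Sum>i\<in>I. real (x i) * (real (x i) - 1))) \<le> real m * K"
    by (simp add: mult_left_mono mult.left_commute)
  also have "\<dots> < 16 * real (card I) * (real l * (real l - 1))"
  proof -
    have "(real q + 1 + (real m - real (Suc q))) * K < 16 * (real q + 1) * (real q + 1 + real u) * (real q + real u)"
      unfolding K_def using q(2) l(2) m by (intro mode_quadratic_nonneg_bound_for_parts_ge_2) simp_all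
    then show ?thesis
      using m(1) unfolding l(1) q(1) by (simp add: algebra_simps)
  qed
  finally show ?thesis
    unfolding m_def using q(1) by (simp add: mult_less_cancel_left_pos)
qed

lemma m_rl_ordered_pairs_less_if_almost_balanced:
  fixes r :: nat and a :: "nat \<Rightarrow> nat"
  assumes "2 \<le> r" "\<forall>i\<in>{1..r}. 1 \<le> a i"
    and "\<forall>i j. 1 \<le> i \<and> i \<le> j \<and> j \<le> r \<longrightarrow> a j \<le> a i"
    and "almost_balanced r a"
  defines "l \<equiv> \<Sum>k=1..r. a k"
  shows "real (m_rl r l) * (\<Sum>k=1..r. real (a k) * (real (a k) - 1)) < real l * (real l - 1)"
proof -
  define c d where "c = a r" and "d = a 1 - a r"
  have r: "finite {1..r}" "2 \<le> card {1..r}"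
    using assms(1) by simp_all
  have parts: "c \<le> a i \<and> a i \<le> c + d" if "i \<in> {1..r}" for i
  proof -
    have "a r \<le> a i" "a i \<le> a 1"
      using assms(3) that by auto
    then show ?thesis
      unfolding c_def d_def by simp
  qed
  have "d choose 2 < c"
    using assms(4) unfolding almost_balanced_def c_def d_def by simp
  show ?thesis
  proof (cases "c = 1")
    case True
    then have "d \<le> 1"
      using \<open>d choose 2 < c\<close> by simp
    obtain i where "i \<in> {1..r}" "a i \<noteq> 1"
      using assms(4) unfolding almost_balanced_def by blast
    then have "(\<Sum>k=1..r. 1) < l"
      unfolding l_def using assms(2) by (intro sum_strict_mono_ex1) force+
    then show ?thesis
      using m_rl_ordered_pairs_less_if_parts_le_2[OF r, where x=a] parts True \<open>d \<le> 1\<close>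
      unfolding l_def by force
  next
    case False
    moreover have "1 \<le> c"
      using assms(1,2) unfolding c_def by simp
    ultimately have "2 \<le> c"
      by simp
    moreover have "real d * (real d - 1) \<le> 2 * real c - 2"
      using \<open>d choose 2 < c\<close> real_choose_two[of d] by linarith
    ultimately show ?thesis
      using m_rl_ordered_pairs_less_if_parts_ge_2[OF r, where x=a and c=c and d=d] parts
      unfolding l_def by simp
  qed
qed

theorem lemma5p2:
  fixes r :: nat and a :: "nat \<Rightarrow> nat"
  assumes "r \<ge> 2"
    and "\<forall>i\<in>{1..r}. a i \<ge> 1"
    and "\<forall>i j. 1 \<le> i \<and> i \<le> j \<and> j \<le> r \<longrightarrow> a j \<le> a i"
    and "almost_balanced r a"
  shows "(\<Sum>k=1..r. a k) choose 2 > m_rl r (\<Sum>k=1..r. a k) * (\<Sum>k=1..r. a k choose 2)"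
proof -
  define l where "l = (\<Sum>k=1..r. a k)"
  define T where "T = (\<Sum>k=1..r. real (a k) * (real (a k) - 1))"
  have "real (\<Sum>k=1..r. a k choose 2) = T / 2"
    unfolding T_def by (simp add: real_choose_two sum_divide_distrib)
  then have "real (m_rl r l * (\<Sum>k=1..r. a k choose 2)) = real (m_rl r l) * T / 2"
    by simp
  also have "\<dots> < real l * (real l - 1) / 2"
    using m_rl_ordered_pairs_less_if_almost_balanced[OF assms] unfolding T_def l_def by simp
  also have "\<dots> = real (l choose 2)"
    by (simp add: real_choose_two)
  finally show ?thesis
    unfolding l_def by (simp only: of_nat_less_iff)
qed

end
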